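(* Let $\Gamma$ be a discrete group acting on the closed disk $\mathbb D^m$ and let $\Delta$ be a closed $\Gamma$-invariant subset of $S^{m-1}=\partial\mathbb D^m$ such that the pair $(\mathbb D^m,\Delta)$ satisfies the properties of condition $( *_\Delta)$. Then there is a second $\Gamma$-space $(\mathbb D^{m+1},\Delta)$, where $\Delta$ (by abuse of notation) is a closed subset of $\partial\mathbb D^{m+1}$ identified $\Gamma$-equivariantly with $\Delta$, which also satisfies the properties of condition $( *_\Delta)$, together with a continuous $\Gamma$-equivariant surjection $\mathbb D^m\times I\to\mathbb D^{m+1}$ (with $\Gamma$ acting trivially on $I$) mapping $\Delta\times I$ to $\Delta$ and mapping $(\mathbb D^m-\Delta)\times I$ homeomorphically onto $\mathbb D^{m+1}-\Delta$.
   Context: A pair $(\mathbb D^n,\Delta)$ with an action of $\Gamma$ on $\mathbb D^n$ and $\Delta$ a closed subset of $S^{n-1}=\partial\mathbb D^n$ satisfies the properties of condition $( *_\Delta)$ if: (i) $\Gamma$ acts properly discontinuously and cocompactly on $\mathbb D^n-\Delta$; (ii) for each compact subset $K$ of $\mathbb D^n-\Delta$ and each $\epsilon>0$ there exists $\delta=\delta(K,\epsilon)>0$ such that for each $\gamma\in\Gamma$, if $d(\gamma K,\Delta)<\delta$ then $\mathrm{diam}(\gamma K)<\epsilon$ (distances in a fixed metric on $\mathbb D^n$). *)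

theory Defs
  imports "HOL-Analysis.Analysis" "HOL-Algebra.Group"
begin

text \<open>Each element then acts by a homeomorphism of D (its inverse acting by the inverse).
  The group is discrete (no topology on G is used).\<close>
definition group_action_on :: "('g, 'm) monoid_scheme \<Rightarrow> ('g \<Rightarrow> 'a::topological_space \<Rightarrow> 'a) \<Rightarrow> 'a set \<Rightarrow> bool" where
  "group_action_on G act D \<longleftrightarrow> group G \<and>
     (\<forall>g\<in>carrier G. continuous_on D (act g) \<and> act g ` D \<subseteq> D) \<and>
     (\<forall>x\<in>D. act \<one>\<^bsub>G\<^esub> x = x) \<and>
     (\<forall>g\<in>carrier G. \<forall>h\<in>carrier G. \<forall>x\<in>D. act (g \<otimes>\<^bsub>G\<^esub> h) x = act g (act h x))"

definition properly_discontinuous_on :: "('g, 'm) monoid_scheme \<Rightarrow> ('g \<Rightarrow> 'a::topological_space \<Rightarrow> 'a) \<Rightarrow> 'a set \<Rightarrow> bool" where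
  "properly_discontinuous_on G act X \<longleftrightarrow>
     (\<forall>K. compact K \<and> K \<subseteq> X \<longrightarrow> finite {g \<in> carrier G. act g ` K \<inter> K \<noteq> {}})"

definition cocompact_on :: "('g, 'm) monoid_scheme \<Rightarrow> ('g \<Rightarrow> 'a::topological_space \<Rightarrow> 'a) \<Rightarrow> 'a set \<Rightarrow> bool" where
  "cocompact_on G act X \<longleftrightarrow> (\<exists>K. compact K \<and> K \<subseteq> X \<and> X \<subseteq> (\<Union>g\<in>carrier G. act g ` K))"

text \<open>Condition (*_Delta) for the pair (D, Delta), D a closed disk, with the Euclidean metric.
  "d(gK, Delta) < delta" is written out as the existence of points at distance < delta
  (the infimum of distances is < delta iff some pair has distance < delta).\<close>
definition star_condition :: "('g, 'm) monoid_scheme \<Rightarrow> ('g \<Rightarrow> 'a::metric_space \<Rightarrow> 'a) \<Rightarrow> 'a set \<Rightarrow> 'a set \<Rightarrow> bool" where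
  "star_condition G act D \<Delta> \<longleftrightarrow>
     properly_discontinuous_on G act (D - \<Delta>) \<and> cocompact_on G act (D - \<Delta>) \<and>
     (\<forall>K \<epsilon>. compact K \<and> K \<subseteq> D - \<Delta> \<and> \<epsilon> > 0 \<longrightarrow>
        (\<exists>\<delta>>0. \<forall>g\<in>carrier G.
           (\<exists>x\<in>act g ` K. \<exists>y\<in>\<Delta>. dist x y < \<delta>) \<longrightarrow> diameter (act g ` K) < \<epsilon>))"

end

theory Submission
  imports Defs
begin

(* The ball D^(m+1) is the cylinder D^m x I with every segment {y} x I, y in Delta, collapsed
   to a point. Let psi(x) = 1 - |x| + d(x, C), where C is the cone from the origin over Delta;
   on D^m it vanishes exactly on Delta. The map (x, t) |-> (x, (2t - 1) psi(x)) sends the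
   cylinder onto the lens {|x| <= 1, |s| <= psi(x)}, injectively off Delta x I. Since d(., C)
   is positively homogeneous, the lens is the unit ball of the positively homogeneous gauge
   max(|x|, |s| + |x| - d(x, C)), so rescaling every ray turns it into the round ball, with
   Delta x I going to Delta x {0} on the boundary sphere.
   The action on the first factor descends through this compact quotient map to a continuous
   action on the ball. Proper discontinuity and cocompactness lift along compact preimages.
   The shrinking condition transfers because the quotient map is uniformly continuous and
   constant on the fibres over Delta: a translate of a compact set that comes near Delta is,
   by the condition downstairs, small and close to a point z of Delta, so its image is close
   to the single point (z, 0). *)

section \<open>Distances, diameters and compact quotients\<close>

lemma le_infdistI: "A \<noteq> {} \<Longrightarrow> (\<And>a. a \<in> A \<Longrightarrow> d \<le> dist x a) \<Longrightarrow> d \<le> infdist x A"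
  by (simp add: infdist_def cINF_greatest)

lemma diameter_le_metric:
  fixes S :: "'a::metric_space set"
  assumes "0 \<le> d" "\<And>x y. x \<in> S \<Longrightarrow> y \<in> S \<Longrightarrow> dist x y \<le> d"
  shows "diameter S \<le> d"
  using assms by (auto simp: diameter_def intro!: cSUP_least)

lemma continuous_on_compact_quotient:
  fixes f :: "'a::metric_space \<Rightarrow> 'b::metric_space" and k :: "'b \<Rightarrow> 'c::metric_space"
  assumes "compact S" "continuous_on S f" "f ` S = T" "continuous_on S (k \<circ> f)"
  shows "continuous_on T k"
  unfolding continuous_on_closed
proof (intro allI impI)
  fix C
  assume "closedin (top_of_set (k ` T)) C"
  then have "closedin (top_of_set S) (S \<inter> (k \<circ> f) -` C)"
    using continuous_on_imp_closedin[OF assms(4)] assms(3)[symmetric] by (simp add: image_image)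
  then have "compact (f ` (S \<inter> (k \<circ> f) -` C))"
    using closedin_compact[OF assms(1)] continuous_on_subset[OF assms(2)]
    by (meson compact_continuous_image inf_le1)
  moreover have "T \<inter> k -` C = f ` (S \<inter> (k \<circ> f) -` C)"
    using assms(3) by auto
  ultimately show "closedin (top_of_set T) (T \<inter> k -` C)"
    using assms(3) by (metis closed_subset compact_imp_closed inf_le1)
qed

lemma homeomorphism_injective_part:
  fixes f :: "'a::metric_space \<Rightarrow> 'b::metric_space"
  assumes "compact S" "continuous_on S f" "f ` S = T" "A \<subseteq> S" "inj_on f A"
    and "f ` (S - A) \<subseteq> B" "f ` A \<inter> B = {}"
  shows "\<exists>g. homeomorphism A (T - B) f g"
proof -
  have "f ` A = T - B"
    using assms(3-7) by blast
  then obtain g where "homeomorphism A (T - B) f g"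
  proof (rule homeomorphism_injective_closed_map[OF continuous_on_subset[OF assms(2,4)] _ assms(5)])
    fix U
    assume "closedin (top_of_set A) U"
    then obtain C where C: "closed C" "U = A \<inter> C"
      by (auto simp: closedin_closed)
    have "f ` U = (T - B) \<inter> f ` (S \<inter> C)"
      using C assms(3-7) by blast
    moreover have "compact (f ` (S \<inter> C))"
      using assms(1,2) C(1) by (meson compact_Int_closed compact_continuous_image continuous_on_subset inf_le1)
    ultimately show "closedin (top_of_set (T - B)) (f ` U)"
      by (simp add: closedin_closed_Int compact_imp_closed)
  qed
  then show ?thesis
    by blast
qed

section \<open>Distance to a cone\<close>

lemma infdist_scaleR_cone_le:
  fixes x :: "'a::real_normed_vector"
  assumes "cone C" "C \<noteq> {}" "0 < c"
  shows "infdist (c *\<^sub>R x) C \<le> c * infdist x C"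
proof -
  have "infdist (c *\<^sub>R x) C / c \<le> infdist x C"
  proof (rule le_infdistI[OF \<open>C \<noteq> {}\<close>])
    fix a assume "a \<in> C"
    then have "infdist (c *\<^sub>R x) C \<le> dist (c *\<^sub>R x) (c *\<^sub>R a)"
      using assms by (intro infdist_le mem_cone) auto
    also have "\<dots> = c * dist x a"
      using assms by (simp add: dist_norm flip: scaleR_diff_right)
    finally show "infdist (c *\<^sub>R x) C / c \<le> dist x a"
      using assms by (simp add: field_simps)
  qed
  then show ?thesis
    using assms by (simp add: field_simps)
qed

lemma infdist_scaleR_cone:
  fixes x :: "'a::real_normed_vector"
  assumes "cone C" "C \<noteq> {}" "0 \<le> c"
  shows "infdist (c *\<^sub>R x) C = c * infdist x C"
proof (cases "c = 0")
  case True
  then show ?thesis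
    using cone_contains_0[OF assms(1)] assms(2) by simp
next
  case False
  then have "0 < c"
    using assms by simp
  have "infdist x C = infdist (inverse c *\<^sub>R (c *\<^sub>R x)) C"
    using \<open>0 < c\<close> by simp
  also have "\<dots> \<le> inverse c * infdist (c *\<^sub>R x) C"
    using assms \<open>0 < c\<close> by (intro infdist_scaleR_cone_le) auto
  finally have "c * infdist x C \<le> infdist (c *\<^sub>R x) C"
    using \<open>0 < c\<close> by (simp add: field_simps)
  with infdist_scaleR_cone_le[OF assms(1,2) \<open>0 < c\<close>, of x] show ?thesis
    by linarith
qed

text \<open>The apex is added so that the cone is nonempty even for \<open>D = {}\<close>
  (the distance to the empty set is \<open>0\<close>).\<close>
definition cone_dist :: "'a::real_normed_vector set \<Rightarrow> 'a \<Rightarrow> real" where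
  "cone_dist D x = infdist x (cone hull (insert 0 D))"

lemma cone_dist_scaleR: "0 \<le> c \<Longrightarrow> cone_dist D (c *\<^sub>R x) = c * cone_dist D x"
  unfolding cone_dist_def
  by (intro infdist_scaleR_cone cone_cone_hull) (auto simp: cone_hull_empty_iff[symmetric])

lemma cone_dist_nonneg: "0 \<le> cone_dist D x"
  by (simp add: cone_dist_def infdist_nonneg)

lemma cone_dist_le_norm: "cone_dist D x \<le> norm x"
  using infdist_le[of 0 "cone hull (insert 0 D)" x]
  by (simp add: cone_dist_def hull_inc)

lemma cone_dist_eq_0: "y \<in> D \<Longrightarrow> cone_dist D y = 0"
  by (simp add: cone_dist_def hull_inc)

lemma continuous_on_cone_dist: "continuous_on S (cone_dist D)"
  unfolding cone_dist_def by (intro continuous_intros)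

lemma dist_cone_hull_sphere_ge:
  fixes x :: "'a::real_normed_vector"
  assumes "D \<subseteq> sphere 0 1" "norm x = 1" "a \<in> cone hull (insert 0 D)"
  shows "min 1 (infdist x D / 2) \<le> dist x a"
proof -
  obtain c y where a: "a = c *\<^sub>R y" "0 \<le> c" "y \<in> insert 0 D"
    using assms(3) by (auto simp: cone_hull_expl)
  show ?thesis
  proof (cases "y = 0")
    case True
    then show ?thesis
      using a assms by simp
  next
    case False
    then have "y \<in> D" "norm y = 1"
      using a assms by auto
    \<comment> \<open>\<open>a\<close> lies on the ray through the unit vector \<open>y\<close>\<close>
    have "a - y = (c - 1) *\<^sub>R y"
      using a by (simp add: algebra_simps)
    then have "dist a y = \<bar>norm a - norm x\<bar>"
      using a \<open>norm y = 1\<close> assms by (simp add: dist_norm)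
    also have "\<dots> \<le> dist x a"
      by (metis abs_minus_commute dist_norm norm_triangle_ineq3)
    finally have "dist x y \<le> 2 * dist x a"
      using dist_triangle[of x y a] by simp
    moreover have "infdist x D \<le> dist x y"
      using \<open>y \<in> D\<close> by (rule infdist_le)
    ultimately show ?thesis
      by simp
  qed
qed

lemma cone_dist_pos:
  fixes x :: "'a::real_normed_vector"
  assumes "closed D" "D \<subseteq> sphere 0 1" "norm x = 1" "x \<notin> D"
  shows "0 < cone_dist D x"
proof (cases "D = {}")
  case True
  then have "cone hull (insert 0 D) = {0}"
    using cone_hull_eq[THEN iffD2, OF cone_0] by simp
  then show ?thesis
    using assms by (simp add: cone_dist_def)
next
  case False
  then have "0 < min 1 (infdist x D / 2)"
    using assms infdist_pos_not_in_closed[of D x] by simp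
  also have "\<dots> \<le> cone_dist D x"
    unfolding cone_dist_def
    by (rule le_infdistI) (use dist_cone_hull_sphere_ge[OF assms(2,3)] in \<open>auto simp flip: cone_hull_empty_iff\<close>)
  finally show ?thesis .
qed

section \<open>Radial rescaling along a gauge\<close>

locale radial_gauge =
  fixes N :: "'a::real_normed_vector \<Rightarrow> real"
  assumes gauge_scaleR: "0 \<le> c \<Longrightarrow> N (c *\<^sub>R p) = c * N p"
    and gauge_pos: "p \<noteq> 0 \<Longrightarrow> 0 < N p"
begin

definition radial_rescale :: "'a \<Rightarrow> 'a" where
  "radial_rescale p = (N p / norm p) *\<^sub>R p"

definition radial_unscale :: "'a \<Rightarrow> 'a" where
  "radial_unscale q = (norm q / N q) *\<^sub>R q"

lemma gauge_0: "N 0 = 0"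
  using gauge_scaleR[of 0 0] by simp

lemma norm_radial_rescale: "norm (radial_rescale p) = N p"
  using gauge_pos[of p] by (cases "p = 0") (auto simp: radial_rescale_def gauge_0)

lemma gauge_radial_unscale: "N (radial_unscale q) = norm q"
  using gauge_pos[of q] by (cases "q = 0") (auto simp: radial_unscale_def gauge_scaleR gauge_0)

lemma radial_rescale_unscale: "radial_rescale (radial_unscale q) = q"
  using gauge_pos[of q]
  by (cases "q = 0") (auto simp: radial_rescale_def radial_unscale_def gauge_scaleR)

lemma radial_unscale_rescale: "radial_unscale (radial_rescale p) = p"
  using gauge_pos[of p]
  by (cases "p = 0") (auto simp: radial_rescale_def radial_unscale_def gauge_scaleR)

lemma continuous_on_radial_rescale:
  assumes "continuous_on UNIV N" and bound: "\<And>p. N p \<le> C * norm p"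
  shows "continuous_on S radial_rescale"
proof -
  have "continuous (at p) radial_rescale" for p
  proof (cases "p = 0")
    case True
    have "(radial_rescale \<longlongrightarrow> 0) (at 0)"
    proof (rule Lim_null_comparison)
      show "\<forall>\<^sub>F p in at 0. norm (radial_rescale p) \<le> C * norm p"
        by (simp add: norm_radial_rescale bound)
      show "((\<lambda>p. C * norm p) \<longlongrightarrow> 0) (at 0)"
        by (intro tendsto_eq_intros) auto
    qed
    then show ?thesis
      using True by (simp add: continuous_at radial_rescale_def)
  next
    case False
    have "continuous_on (- {0}) radial_rescale"
      unfolding radial_rescale_def
      by (intro continuous_intros continuous_on_subset[OF assms(1)]) auto
    then show ?thesis
      using False by (auto simp: continuous_on_eq_continuous_at[OF open_Compl[OF closed_singleton]])
  qed
  then show ?thesis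
    by (simp add: continuous_at_imp_continuous_on)
qed

end

section \<open>Pinching the cylinder onto the ball\<close>

definition pinch_height :: "'a::real_normed_vector set \<Rightarrow> 'a \<Rightarrow> real" where
  "pinch_height D x = 1 - norm x + cone_dist D x"

definition pinch_gauge :: "'a::real_normed_vector set \<Rightarrow> 'a \<times> real \<Rightarrow> real" where
  "pinch_gauge D p = max (norm (fst p)) (\<bar>snd p\<bar> + norm (fst p) - cone_dist D (fst p))"

lemma pinch_gauge_le_1_iff:
  "pinch_gauge D (x, s) \<le> 1 \<longleftrightarrow> norm x \<le> 1 \<and> \<bar>s\<bar> \<le> pinch_height D x"
  by (auto simp: pinch_gauge_def pinch_height_def)

lemma pinch_gauge_Pair_0: "y \<in> D \<Longrightarrow> pinch_gauge D (y, 0) = norm y"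
  by (simp add: pinch_gauge_def cone_dist_eq_0)

lemma pinch_gauge_bound: "pinch_gauge D p \<le> 2 * norm p"
proof (cases p)
  case (Pair x s)
  then show ?thesis
    using norm_fst_le[of x s] norm_snd_le[of s x] cone_dist_nonneg[of D x]
    by (simp add: pinch_gauge_def)
qed

interpretation pinch: radial_gauge "pinch_gauge D"
proof
  show "pinch_gauge D (c *\<^sub>R p) = c * pinch_gauge D p" if "0 \<le> c" for c and p :: "'a \<times> real"
    using that by (simp add: pinch_gauge_def cone_dist_scaleR abs_mult max_mult_distrib_left
        flip: distrib_left right_diff_distrib)
  show "0 < pinch_gauge D p" if "p \<noteq> 0" for p :: "'a \<times> real"
    using that cone_dist_le_norm[of D "fst p"]
    by (cases p) (auto simp: pinch_gauge_def zero_prod_def less_max_iff_disj)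
qed

lemma continuous_on_pinch_gauge: "continuous_on S (pinch_gauge D)"
  unfolding pinch_gauge_def
  by (intro continuous_intros continuous_on_compose2[OF continuous_on_cone_dist]) auto

lemma pinch_height_nonneg: "norm x \<le> 1 \<Longrightarrow> 0 \<le> pinch_height D x"
  using cone_dist_nonneg[of D x] by (simp add: pinch_height_def)

lemma pinch_height_pos:
  assumes "closed D" "D \<subseteq> sphere 0 1" "norm x \<le> 1" "x \<notin> D"
  shows "0 < pinch_height D x"
  using cone_dist_pos[OF assms(1,2) _ assms(4)] cone_dist_nonneg[of D x] assms(3)
  by (cases "norm x = 1") (auto simp: pinch_height_def)

lemma pinch_height_0: "D \<subseteq> sphere 0 1 \<Longrightarrow> y \<in> D \<Longrightarrow> pinch_height D y = 0"
  by (auto simp: pinch_height_def cone_dist_eq_0)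

definition pinch_map :: "'a::real_normed_vector set \<Rightarrow> 'a \<times> real \<Rightarrow> 'a \<times> real" where
  "pinch_map D p = pinch.radial_rescale D (fst p, (2 * snd p - 1) * pinch_height D (fst p))"

definition pinch_inv :: "'a::real_normed_vector set \<Rightarrow> 'a \<times> real \<Rightarrow> 'a \<times> real" where
  "pinch_inv D q = (\<lambda>(x, s). (x, (s / pinch_height D x + 1) / 2)) (pinch.radial_unscale D q)"

lemma pinch_map_collapse:
  assumes "D \<subseteq> sphere 0 1" "y \<in> D"
  shows "pinch_map D (y, t) = (y, 0)"
proof -
  have "norm y = 1"
    using assms by auto
  then show ?thesis
    using assms pinch_gauge_Pair_0[OF assms(2)]
    by (simp add: pinch_map_def pinch_height_0 pinch.radial_rescale_def norm_Pair)
qed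

lemma continuous_on_pinch_map: "continuous_on S (pinch_map D)"
proof -
  have "continuous_on UNIV (pinch.radial_rescale D)"
    using continuous_on_pinch_gauge pinch_gauge_bound by (rule pinch.continuous_on_radial_rescale)
  moreover have "continuous_on S (\<lambda>p. (fst p, (2 * snd p - 1) * pinch_height D (fst p)))"
    unfolding pinch_height_def
    by (intro continuous_intros continuous_on_compose2[OF continuous_on_cone_dist]) auto
  ultimately show ?thesis
    unfolding pinch_map_def by (rule continuous_on_compose2) auto
qed

lemma norm_pinch_map_le:
  assumes "norm x \<le> 1" "t \<in> {0..1}"
  shows "norm (pinch_map D (x, t)) \<le> 1"
proof -
  have "\<bar>2 * t - 1\<bar> \<le> 1"
    using assms by auto
  then have "\<bar>(2 * t - 1) * pinch_height D x\<bar> \<le> pinch_height D x"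
    using pinch_height_nonneg[OF assms(1), of D] by (simp add: abs_mult mult_left_le_one_le)
  then show ?thesis
    using assms by (simp add: pinch_map_def pinch.norm_radial_rescale pinch_gauge_le_1_iff)
qed

lemma pinch_inv_pinch_map:
  assumes "closed D" "D \<subseteq> sphere 0 1" "norm x \<le> 1" "x \<notin> D"
  shows "pinch_inv D (pinch_map D (x, t)) = (x, t)"
  using pinch_height_pos[OF assms]
  by (simp add: pinch_map_def pinch_inv_def pinch.radial_unscale_rescale)

lemma pinch_map_pinch_inv:
  assumes D: "closed D" "D \<subseteq> sphere 0 1"
    and q: "norm q \<le> 1" "q \<notin> (\<lambda>y. (y, 0)) ` D"
  shows "pinch_inv D q \<in> (cball 0 1 - D) \<times> {0..1}" "pinch_map D (pinch_inv D q) = q"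
proof -
  obtain x s where xs: "pinch.radial_unscale D q = (x, s)"
    by fastforce
  then have "pinch.radial_rescale D (x, s) = q"
    by (metis pinch.radial_rescale_unscale)
  have "pinch_gauge D (x, s) \<le> 1"
    using q xs pinch.gauge_radial_unscale by metis
  then have x: "norm x \<le> 1" and s: "\<bar>s\<bar> \<le> pinch_height D x"
    by (simp_all add: pinch_gauge_le_1_iff)
  have "x \<notin> D"
  proof
    assume "x \<in> D"
    \<comment> \<open>then \<open>(x, s) = (x, 0)\<close> lies on the unit sphere, where the gauge is the norm\<close>
    then have "s = 0" "norm x = 1"
      using s D by (auto simp: pinch_height_0)
    then have "q = (x, 0)"
      using \<open>pinch.radial_rescale D (x, s) = q\<close> pinch_gauge_Pair_0[OF \<open>x \<in> D\<close>]
      by (simp add: pinch.radial_rescale_def norm_Pair)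
    with q \<open>x \<in> D\<close> show False
      by auto
  qed
  then have h: "0 < pinch_height D x"
    using pinch_height_pos[OF D x] by simp
  then have "(s / pinch_height D x + 1) / 2 \<in> {0..1}"
    using s by (simp add: abs_le_iff field_simps)
  then show "pinch_inv D q \<in> (cball 0 1 - D) \<times> {0..1}"
    using x \<open>x \<notin> D\<close> xs by (simp add: pinch_inv_def)
  have "(2 * ((s / pinch_height D x + 1) / 2) - 1) * pinch_height D x = s"
    using h by (simp add: field_simps)
  then show "pinch_map D (pinch_inv D q) = q"
    using xs \<open>pinch.radial_rescale D (x, s) = q\<close> by (simp add: pinch_inv_def pinch_map_def)
qed

lemma pinch_map_notin_collapsed:
  assumes "closed D" "D \<subseteq> sphere 0 1" "norm x \<le> 1" "x \<notin> D"
  shows "pinch_map D (x, t) \<notin> (\<lambda>y. (y, 0)) ` D"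
proof
  assume "pinch_map D (x, t) \<in> (\<lambda>y. (y, 0)) ` D"
  then obtain y where "y \<in> D" "pinch_map D (x, t) = (y, 0)"
    by auto
  moreover have "pinch.radial_unscale D (y, 0) = (y, 0)"
    using \<open>y \<in> D\<close> assms(2) pinch_gauge_Pair_0[of y D]
    by (auto simp: pinch.radial_unscale_def norm_Pair)
  ultimately have "x = y"
    using pinch_inv_pinch_map[OF assms, of t] by (simp add: pinch_inv_def)
  with \<open>y \<in> D\<close> assms(4) show False
    by simp
qed

lemma pinch_map_image:
  assumes "closed D" "D \<subseteq> sphere 0 1"
  shows "pinch_map D ` (cball 0 1 \<times> {0..1}) = cball 0 1"
proof
  show "pinch_map D ` (cball 0 1 \<times> {0..1}) \<subseteq> cball 0 1"
    using norm_pinch_map_le by fastforce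
  show "cball 0 1 \<subseteq> pinch_map D ` (cball 0 1 \<times> {0..1})"
  proof
    fix q :: "'a \<times> real"
    assume q: "q \<in> cball 0 1"
    show "q \<in> pinch_map D ` (cball 0 1 \<times> {0..1})"
    proof (cases "q \<in> (\<lambda>y. (y, 0)) ` D")
      case True
      then obtain y where "y \<in> D" "q = pinch_map D (y, 0)"
        using pinch_map_collapse[OF assms(2)] by auto
      then show ?thesis
        using assms(2) by force
    next
      case False
      then show ?thesis
        using pinch_map_pinch_inv[OF assms, of q] q by (metis DiffD1 image_eqI mem_Times_iff mem_cball_0)
    qed
  qed
qed

lemma inj_on_pinch_map:
  assumes "closed D" "D \<subseteq> sphere 0 1"
  shows "inj_on (pinch_map D) ((cball 0 1 - D) \<times> {0..1})"
  by (rule inj_on_inverseI[where g = "pinch_inv D"]) (auto simp: pinch_inv_pinch_map[OF assms])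

section \<open>Group actions induced through a collapsing map\<close>

locale cylinder_collapse =
  fixes G :: "('g, 'm) monoid_scheme" and act :: "'g \<Rightarrow> 'a::metric_space \<Rightarrow> 'a"
    and D \<Delta> :: "'a set" and f :: "'a \<times> real \<Rightarrow> 'b::heine_borel" and h :: "'a \<Rightarrow> 'b"
    and D' \<Delta>' :: "'b set"
  assumes group_action: "group_action_on G act D"
    and invariant: "\<And>g. g \<in> carrier G \<Longrightarrow> act g ` \<Delta> \<subseteq> \<Delta>"
    and compact_D: "compact D" and closed_\<Delta>: "closed \<Delta>" and \<Delta>_subset: "\<Delta> \<subseteq> D"
    and continuous_f: "continuous_on (D \<times> {0..1}) f"
    and image_f: "f ` (D \<times> {0..1}) = D'"
    and collapse: "\<And>x t. x \<in> \<Delta> \<Longrightarrow> t \<in> {0..1} \<Longrightarrow> f (x, t) = h x"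
    and inj_h: "inj_on h \<Delta>" and \<Delta>'_eq: "\<Delta>' = h ` \<Delta>"
    and inj_f: "inj_on f ((D - \<Delta>) \<times> {0..1})"
    and f_notin_\<Delta>': "\<And>x t. x \<in> D - \<Delta> \<Longrightarrow> t \<in> {0..1} \<Longrightarrow> f (x, t) \<notin> \<Delta>'"
begin

lemma group_G: "group G"
  using group_action by (simp add: group_action_on_def)

lemma act_closed: "g \<in> carrier G \<Longrightarrow> x \<in> D \<Longrightarrow> act g x \<in> D"
  using group_action by (auto simp: group_action_on_def)

lemma continuous_on_act: "g \<in> carrier G \<Longrightarrow> continuous_on D (act g)"
  using group_action by (simp add: group_action_on_def)

lemma act_one: "x \<in> D \<Longrightarrow> act \<one>\<^bsub>G\<^esub> x = x"
  using group_action by (simp add: group_action_on_def)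

lemma act_mult:
  "g \<in> carrier G \<Longrightarrow> k \<in> carrier G \<Longrightarrow> x \<in> D \<Longrightarrow> act (g \<otimes>\<^bsub>G\<^esub> k) x = act g (act k x)"
  using group_action by (simp add: group_action_on_def)

lemma act_outside:
  assumes "g \<in> carrier G" "x \<in> D - \<Delta>"
  shows "act g x \<in> D - \<Delta>"
proof
  show "act g x \<in> D"
    using act_closed assms by blast
  have inv_g: "inv\<^bsub>G\<^esub> g \<in> carrier G"
    using group.inv_closed[OF group_G assms(1)] .
  have "act (inv\<^bsub>G\<^esub> g) (act g x) = act (inv\<^bsub>G\<^esub> g \<otimes>\<^bsub>G\<^esub> g) x"
    using act_mult[OF inv_g assms(1)] assms(2) by simp
  also have "\<dots> = x"
    using group.l_inv[OF group_G assms(1)] act_one assms(2) by simp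
  finally have "act (inv\<^bsub>G\<^esub> g) (act g x) = x" .
  show "act g x \<notin> \<Delta>"
  proof
    assume "act g x \<in> \<Delta>"
    then have "act (inv\<^bsub>G\<^esub> g) (act g x) \<in> \<Delta>"
      using invariant[OF inv_g] by blast
    with \<open>act (inv\<^bsub>G\<^esub> g) (act g x) = x\<close> assms(2) show False
      by simp
  qed
qed

lemma f_in_\<Delta>'_iff: "x \<in> D \<Longrightarrow> t \<in> {0..1} \<Longrightarrow> f (x, t) \<in> \<Delta>' \<longleftrightarrow> x \<in> \<Delta>"
  using f_notin_\<Delta>'[of x t] collapse[of x t] \<Delta>'_eq by auto

lemma same_fibre:
  assumes "x \<in> D" "t \<in> {0..1}" "x' \<in> D" "t' \<in> {0..1}" "f (x, t) = f (x', t')"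
  shows "x = x'" "x \<notin> \<Delta> \<Longrightarrow> t = t'"
proof -
  have iff: "x \<in> \<Delta> \<longleftrightarrow> x' \<in> \<Delta>"
    using assms f_in_\<Delta>'_iff[of x t] f_in_\<Delta>'_iff[of x' t'] by simp
  show "x = x'"
  proof (cases "x \<in> \<Delta>")
    case True
    then have "h x = h x'"
      using assms iff collapse[of x t] collapse[of x' t'] by simp
    then show ?thesis
      using inj_onD[OF inj_h] True iff by blast
  next
    case False
    then show ?thesis
      using inj_onD[OF inj_f assms(5)] assms iff by simp
  qed
  show "t = t'" if "x \<notin> \<Delta>"
    using inj_onD[OF inj_f assms(5)] assms iff that by simp
qed

lemma image_fE:
  assumes "q \<in> D'"
  obtains x t where "x \<in> D" "t \<in> {0..1}" "q = f (x, t)"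
  using assms image_f by auto

lemma f_in_D': "x \<in> D \<Longrightarrow> t \<in> {0..1} \<Longrightarrow> f (x, t) \<in> D'"
  using image_f by auto

text \<open>Independent of the chosen preimage by \<open>same_fibre\<close>, since \<open>act g\<close> preserves \<open>\<Delta>\<close>,
  where \<open>f\<close> forgets the \<open>t\<close>-coordinate.\<close>
definition induced_act :: "'g \<Rightarrow> 'b \<Rightarrow> 'b" where
  "induced_act g q = f (act g (fst (inv_into (D \<times> {0..1}) f q)), snd (inv_into (D \<times> {0..1}) f q))"

lemma induced_act_f:
  assumes "g \<in> carrier G" "x \<in> D" "t \<in> {0..1}"
  shows "induced_act g (f (x, t)) = f (act g x, t)"
proof -
  obtain x' t' where xt': "inv_into (D \<times> {0..1}) f (f (x, t)) = (x', t')"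
    by fastforce
  have xt'_in: "(x', t') \<in> D \<times> {0..1}"
    using assms xt' by (metis image_eqI inv_into_into mem_Times_iff fst_conv snd_conv)
  have "f (x', t') = f (x, t)"
    using assms xt' by (metis f_inv_into_f image_eqI mem_Times_iff fst_conv snd_conv)
  then have "x' = x" "x \<notin> \<Delta> \<Longrightarrow> t' = t"
    using same_fibre[of x' t' x t] assms xt'_in by auto
  have "induced_act g (f (x, t)) = f (act g x, t')"
    using xt' \<open>x' = x\<close> by (simp add: induced_act_def)
  also have "\<dots> = f (act g x, t)"
  proof (cases "x \<in> \<Delta>")
    case True
    then have "act g x \<in> \<Delta>"
      using invariant[OF assms(1)] by blast
    then show ?thesis
      using collapse xt'_in assms(3) by auto
  next
    case False
    then show ?thesis
      using \<open>x \<notin> \<Delta> \<Longrightarrow> t' = t\<close> by simp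
  qed
  finally show ?thesis .
qed

lemma compact_\<Delta>: "compact \<Delta>"
  using compact_Int_closed[OF compact_D closed_\<Delta>] \<Delta>_subset by (simp add: Int_absorb1)

lemma compact_cylinder: "compact (D \<times> {0..1::real})"
  using compact_D by (simp add: compact_Times)

lemma group_action_induced: "group_action_on G induced_act D'"
  unfolding group_action_on_def
proof (intro conjI ballI)
  show "group G"
    by (rule group_G)
next
  fix g
  assume g: "g \<in> carrier G"
  show "continuous_on D' (induced_act g)"
  proof (rule continuous_on_compact_quotient[OF compact_cylinder continuous_f image_f])
    have "continuous_on (D \<times> {0..1}) (\<lambda>p. f (act g (fst p), snd p))"
      by (rule continuous_on_compose2[OF continuous_f])
        (auto intro!: continuous_intros continuous_on_compose2[OF continuous_on_act[OF g]]
          simp: act_closed[OF g])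
    then show "continuous_on (D \<times> {0..1}) (induced_act g \<circ> f)"
      by (rule continuous_on_eq) (auto simp: induced_act_f[OF g])
  qed
  show "induced_act g ` D' \<subseteq> D'"
  proof
    fix q
    assume "q \<in> induced_act g ` D'"
    then obtain x t where "x \<in> D" "t \<in> {0..1}" "q = induced_act g (f (x, t))"
      by (auto elim: image_fE)
    then show "q \<in> D'"
      by (simp add: induced_act_f[OF g] f_in_D' act_closed[OF g])
  qed
next
  fix q
  assume "q \<in> D'"
  then obtain x t where "x \<in> D" "t \<in> {0..1}" "q = f (x, t)"
    by (rule image_fE)
  then show "induced_act \<one>\<^bsub>G\<^esub> q = q"
    using induced_act_f[of "\<one>\<^bsub>G\<^esub>"] act_one group.is_monoid[OF group_G] by simp
next
  fix g k q
  assume g: "g \<in> carrier G" and k: "k \<in> carrier G" and "q \<in> D'"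
  then obtain x t where x: "x \<in> D" "t \<in> {0..1}" "q = f (x, t)"
    by (auto elim: image_fE)
  have "g \<otimes>\<^bsub>G\<^esub> k \<in> carrier G"
    by (rule monoid.m_closed[OF group.is_monoid[OF group_G] g k])
  then show "induced_act (g \<otimes>\<^bsub>G\<^esub> k) q = induced_act g (induced_act k q)"
    using x induced_act_f[OF g act_closed[OF k x(1)] x(2)] induced_act_f[OF k x(1,2)]
      induced_act_f[of "g \<otimes>\<^bsub>G\<^esub> k"] act_mult[OF g k x(1)]
    by simp
qed

lemma induced_act_h:
  assumes "g \<in> carrier G" "x \<in> \<Delta>"
  shows "h (act g x) = induced_act g (h x)"
proof -
  have "act g x \<in> \<Delta>"
    using invariant[OF assms(1)] assms(2) by blast
  then have "h (act g x) = f (act g x, 0)"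
    by (simp add: collapse)
  also have "\<dots> = induced_act g (f (x, 0))"
    using induced_act_f[OF assms(1), of x 0] assms \<Delta>_subset by auto
  also have "\<dots> = induced_act g (h x)"
    using assms(2) by (simp add: collapse)
  finally show ?thesis .
qed

lemma induced_act_invariant:
  assumes "g \<in> carrier G"
  shows "induced_act g ` \<Delta>' \<subseteq> \<Delta>'"
proof
  fix q
  assume "q \<in> induced_act g ` \<Delta>'"
  then obtain x where "x \<in> \<Delta>" "q = h (act g x)"
    using induced_act_h[OF assms] \<Delta>'_eq by auto
  then show "q \<in> \<Delta>'"
    using invariant[OF assms] \<Delta>'_eq by blast
qed

lemma compact_lift:
  assumes "compact K" "K \<subseteq> D' - \<Delta>'"
  obtains L where "compact L" "L \<subseteq> D - \<Delta>" "K \<subseteq> f ` (L \<times> {0..1})"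
proof
  define F where "F = (D \<times> {0..1}) \<inter> f -` K"
  have "closedin (top_of_set D') K"
    using assms by (intro closed_subset compact_imp_closed) auto
  then have "closedin (top_of_set (D \<times> {0..1})) F"
    unfolding F_def using continuous_on_imp_closedin[OF continuous_f] image_f by simp
  then have "compact F"
    using closedin_compact[OF compact_cylinder] by blast
  then show "compact (fst ` F)"
    by (intro compact_continuous_image continuous_intros)
  show "fst ` F \<subseteq> D - \<Delta>"
  proof
    fix x
    assume "x \<in> fst ` F"
    then obtain t where "x \<in> D" "t \<in> {0..1}" "f (x, t) \<in> K"
      unfolding F_def by force
    then show "x \<in> D - \<Delta>"
      using assms(2) f_in_\<Delta>'_iff by blast
  qed
  show "K \<subseteq> f ` (fst ` F \<times> {0..1})"
  proof
    fix q
    assume "q \<in> K"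
    then have "q \<in> D'"
      using assms(2) by blast
    then obtain x t where xt: "x \<in> D" "t \<in> {0..1}" "q = f (x, t)"
      by (rule image_fE)
    then have "(x, t) \<in> F"
      using \<open>q \<in> K\<close> by (simp add: F_def)
    then have "x \<in> fst ` F"
      by (metis fst_conv image_eqI)
    then show "q \<in> f ` (fst ` F \<times> {0..1})"
      using xt(2,3) by blast
  qed
qed

lemma image_cylinderE:
  assumes "q \<in> f ` (L \<times> {0..1})"
  obtains x t where "x \<in> L" "t \<in> {0..1}" "q = f (x, t)"
  using assms by auto

lemma properly_discontinuous_induced:
  assumes "properly_discontinuous_on G act (D - \<Delta>)"
  shows "properly_discontinuous_on G induced_act (D' - \<Delta>')"
  unfolding properly_discontinuous_on_def
proof (intro allI impI)
  fix K
  assume "compact K \<and> K \<subseteq> D' - \<Delta>'"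
  then obtain L where L: "compact L" "L \<subseteq> D - \<Delta>" "K \<subseteq> f ` (L \<times> {0..1})"
    using compact_lift[of K] by (elim conjE) blast
  have "{g \<in> carrier G. induced_act g ` K \<inter> K \<noteq> {}} \<subseteq> {g \<in> carrier G. act g ` L \<inter> L \<noteq> {}}"
  proof
    fix g
    assume "g \<in> {g \<in> carrier G. induced_act g ` K \<inter> K \<noteq> {}}"
    then obtain q where g: "g \<in> carrier G" and "q \<in> K" "induced_act g q \<in> K"
      by blast
    then obtain x t x' t' where x: "x \<in> L" "t \<in> {0..1}" "q = f (x, t)"
      and x': "x' \<in> L" "t' \<in> {0..1}" "induced_act g q = f (x', t')"
      using L(3) by (metis image_cylinderE subsetD)
    have "act g x \<in> D" "x' \<in> D"
      using act_outside[OF g] x(1) x'(1) L(2) by auto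
    moreover have "f (act g x, t) = f (x', t')"
      using induced_act_f[OF g _ x(2), of x] x(1,3) x'(3) L(2) by auto
    ultimately have "act g x = x'"
      using same_fibre(1) x(2) x'(2) by blast
    then show "g \<in> {g \<in> carrier G. act g ` L \<inter> L \<noteq> {}}"
      using g x(1) x'(1) by blast
  qed
  moreover have "finite {g \<in> carrier G. act g ` L \<inter> L \<noteq> {}}"
    using assms L(1,2) by (simp add: properly_discontinuous_on_def)
  ultimately show "finite {g \<in> carrier G. induced_act g ` K \<inter> K \<noteq> {}}"
    by (rule finite_subset)
qed

lemma cocompact_induced:
  assumes "cocompact_on G act (D - \<Delta>)"
  shows "cocompact_on G induced_act (D' - \<Delta>')"
proof -
  obtain K where K: "compact K" "K \<subseteq> D - \<Delta>" "D - \<Delta> \<subseteq> (\<Union>g\<in>carrier G. act g ` K)"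
    using assms by (auto simp: cocompact_on_def)
  have "compact (f ` (K \<times> {0..1}))"
    using K by (intro compact_continuous_image continuous_on_subset[OF continuous_f])
      (auto simp: compact_Times)
  moreover have "f ` (K \<times> {0..1}) \<subseteq> D' - \<Delta>'"
    using K f_notin_\<Delta>' f_in_D' by auto
  moreover have "D' - \<Delta>' \<subseteq> (\<Union>g\<in>carrier G. induced_act g ` f ` (K \<times> {0..1}))"
  proof
    fix q
    assume q: "q \<in> D' - \<Delta>'"
    then obtain x t where x: "x \<in> D" "t \<in> {0..1}" "q = f (x, t)"
      by (auto elim: image_fE)
    then have "x \<in> D - \<Delta>"
      using q f_in_\<Delta>'_iff by auto
    then obtain g k where gk: "g \<in> carrier G" "k \<in> K" "x = act g k"
      using K(3) by blast
    then have "q = induced_act g (f (k, t))"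
      using induced_act_f[OF gk(1) _ x(2), of k] K(2) x(3) by auto
    then show "q \<in> (\<Union>g\<in>carrier G. induced_act g ` f ` (K \<times> {0..1}))"
      using gk(1,2) x(2) by blast
  qed
  ultimately show ?thesis
    unfolding cocompact_on_def by blast
qed

lemma compact_\<Delta>': "compact \<Delta>'"
proof -
  have "\<Delta>' = (\<lambda>x. f (x, 0)) ` \<Delta>"
    using \<Delta>'_eq collapse by auto
  moreover have "continuous_on \<Delta> (\<lambda>x. f (x, 0))"
    using \<Delta>_subset by (intro continuous_on_compose2[OF continuous_f] continuous_intros) auto
  ultimately show ?thesis
    using compact_\<Delta> by (simp add: compact_continuous_image)
qed

lemma near_\<Delta>'_imp_near_\<Delta>:
  assumes "0 < \<delta>"
  obtains \<delta>' where "0 < \<delta>'"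
    "\<And>x t y. x \<in> D \<Longrightarrow> t \<in> {0..1} \<Longrightarrow> y \<in> \<Delta>' \<Longrightarrow> dist (f (x, t)) y < \<delta>' \<Longrightarrow>
      \<exists>z\<in>\<Delta>. dist x z < \<delta>"
proof -
  define M where "M = (D \<times> {0..1::real}) \<inter> (\<Inter>z\<in>\<Delta>. {p. \<delta> \<le> dist (fst p) z})"
  have "compact M"
    unfolding M_def
    by (intro compact_Int_closed compact_cylinder closed_INT ballI closed_Collect_le continuous_intros)
  then have "compact (f ` M)"
    by (intro compact_continuous_image continuous_on_subset[OF continuous_f]) (auto simp: M_def)
  moreover have "f ` M \<inter> \<Delta>' = {}"
  proof -
    have "fst p \<in> D - \<Delta>" if "p \<in> M" for p
      using that assms by (force simp: M_def)
    then show ?thesis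
      using f_notin_\<Delta>' by (force simp: M_def)
  qed
  ultimately obtain \<delta>' where "0 < \<delta>'" and sep: "\<And>u y. u \<in> f ` M \<Longrightarrow> y \<in> \<Delta>' \<Longrightarrow> \<delta>' \<le> dist u y"
    using separate_compact_closed[OF _ compact_imp_closed[OF compact_\<Delta>']] by metis
  show ?thesis
  proof (rule that[OF \<open>0 < \<delta>'\<close>], rule ccontr)
    fix x t y
    assume "x \<in> D" "t \<in> {0..1}" "y \<in> \<Delta>'" "dist (f (x, t)) y < \<delta>'" "\<not> (\<exists>z\<in>\<Delta>. dist x z < \<delta>)"
    then have "f (x, t) \<in> f ` M"
      by (force simp: M_def not_less)
    with sep \<open>y \<in> \<Delta>'\<close> \<open>dist (f (x, t)) y < \<delta>'\<close> show False
      by fastforce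
  qed
qed

lemma induced_act_near_collapsed_point:
  assumes g: "g \<in> carrier G" and L: "compact L" "L \<subseteq> D - \<Delta>"
    and modulus: "\<And>p p'. p \<in> D \<times> {0..1} \<Longrightarrow> p' \<in> D \<times> {0..1} \<Longrightarrow> dist p' p < \<eta> \<Longrightarrow>
      dist (f p') (f p) < e"
    and "x \<in> L" "z \<in> \<Delta>" "dist (act g x) z < \<eta> / 2" "diameter (act g ` L) < \<eta> / 2"
    and "p \<in> induced_act g ` f ` (L \<times> {0..1})"
  shows "dist p (h z) < e"
proof -
  obtain x' t' where x': "x' \<in> L" "t' \<in> {0..1}" "p = induced_act g (f (x', t'))"
    using assms(9) by (blast elim: image_cylinderE)
  then have p: "p = f (act g x', t')"
    using induced_act_f[OF g] L(2) by auto
  have "compact (act g ` L)"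
    using L continuous_on_subset[OF continuous_on_act[OF g]]
    by (meson Diff_subset compact_continuous_image subset_trans)
  then have "dist (act g x') (act g x) \<le> diameter (act g ` L)"
    using diameter_bounded_bound[OF compact_imp_bounded] x'(1) \<open>x \<in> L\<close> by blast
  then have "dist (act g x', t') (z, t') < \<eta>"
    using dist_triangle[of "act g x'" z "act g x"] assms(7,8) by (simp add: dist_Pair_Pair)
  then have "dist (f (act g x', t')) (f (z, t')) < e"
    using modulus[of "(z, t')" "(act g x', t')"] act_outside[OF g] x'(1,2) L(2) \<Delta>_subset \<open>z \<in> \<Delta>\<close>
    by auto
  then show ?thesis
    using p collapse[OF \<open>z \<in> \<Delta>\<close> x'(2)] by simp
qed

lemma induced_act_shrinks:
  assumes star: "star_condition G act D \<Delta>" and K: "compact K" "K \<subseteq> D' - \<Delta>'" and "0 < \<epsilon>"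
  shows "\<exists>\<delta>>0. \<forall>g\<in>carrier G. (\<exists>q\<in>induced_act g ` K. \<exists>y\<in>\<Delta>'. dist q y < \<delta>) \<longrightarrow>
           diameter (induced_act g ` K) < \<epsilon>"
proof -
  obtain L where L: "compact L" "L \<subseteq> D - \<Delta>" "K \<subseteq> f ` (L \<times> {0..1})"
    using compact_lift[OF K] .
  obtain \<eta> where "0 < \<eta>" and \<eta>: "\<And>p p'. p \<in> D \<times> {0..1} \<Longrightarrow> p' \<in> D \<times> {0..1} \<Longrightarrow>
      dist p' p < \<eta> \<Longrightarrow> dist (f p') (f p) < \<epsilon> / 4"
    using compact_uniformly_continuous[OF continuous_f compact_cylinder] \<open>0 < \<epsilon>\<close>
    unfolding uniformly_continuous_on_def by (metis divide_pos_pos zero_less_numeral)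
  have "0 < \<eta> / 2"
    using \<open>0 < \<eta>\<close> by simp
  then have "\<exists>\<delta>>0. \<forall>g\<in>carrier G. (\<exists>x\<in>act g ` L. \<exists>z\<in>\<Delta>. dist x z < \<delta>) \<longrightarrow> diameter (act g ` L) < \<eta> / 2"
    using star L(1,2) unfolding star_condition_def by blast
  then obtain \<delta>\<^sub>1 where "0 < \<delta>\<^sub>1" and \<delta>\<^sub>1: "\<And>g. g \<in> carrier G \<Longrightarrow>
      (\<exists>x\<in>act g ` L. \<exists>z\<in>\<Delta>. dist x z < \<delta>\<^sub>1) \<Longrightarrow> diameter (act g ` L) < \<eta> / 2"
    by blast
  obtain \<delta> where "0 < \<delta>" and \<delta>: "\<And>x t y. x \<in> D \<Longrightarrow> t \<in> {0..1} \<Longrightarrow> y \<in> \<Delta>' \<Longrightarrow>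
      dist (f (x, t)) y < \<delta> \<Longrightarrow> \<exists>z\<in>\<Delta>. dist x z < min \<delta>\<^sub>1 (\<eta> / 2)"
    using near_\<Delta>'_imp_near_\<Delta>[of "min \<delta>\<^sub>1 (\<eta> / 2)"] \<open>0 < \<delta>\<^sub>1\<close> \<open>0 < \<eta>\<close> by auto
  have "diameter (induced_act g ` K) < \<epsilon>"
    if g: "g \<in> carrier G" and "k \<in> K" "y \<in> \<Delta>'" "dist (induced_act g k) y < \<delta>" for g k y
  proof -
    obtain x t where x: "x \<in> L" "t \<in> {0..1}" "k = f (x, t)"
      using L(3) \<open>k \<in> K\<close> by (blast elim: image_cylinderE)
    have "act g x \<in> D"
      using act_outside[OF g] x(1) L(2) by blast
    moreover have "induced_act g k = f (act g x, t)"
      using induced_act_f[OF g _ x(2)] x(1,3) L(2) by auto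
    ultimately have "\<exists>z\<in>\<Delta>. dist (act g x) z < min \<delta>\<^sub>1 (\<eta> / 2)"
      using \<delta>[of "act g x" t y] x(2) that(3,4) by simp
    then obtain z where "z \<in> \<Delta>" and z: "dist (act g x) z < min \<delta>\<^sub>1 (\<eta> / 2)"
      by blast
    have "\<exists>x\<in>act g ` L. \<exists>z\<in>\<Delta>. dist x z < \<delta>\<^sub>1"
      using x(1) \<open>z \<in> \<Delta>\<close> z by auto
    then have diam: "diameter (act g ` L) < \<eta> / 2"
      by (rule \<delta>\<^sub>1[OF g])
    have close: "dist p (h z) < \<epsilon> / 4" if "p \<in> induced_act g ` K" for p
      using induced_act_near_collapsed_point[OF g L(1,2) \<eta> x(1) \<open>z \<in> \<Delta>\<close> _ diam] z that L(3)
      by auto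
    have "diameter (induced_act g ` K) \<le> \<epsilon> / 2"
    proof (rule diameter_le_metric)
      fix u v
      assume "u \<in> induced_act g ` K" "v \<in> induced_act g ` K"
      then show "dist u v \<le> \<epsilon> / 2"
        using close[of u] close[of v] dist_triangle3[of u v "h z"] by (simp add: dist_commute)
    qed (use \<open>0 < \<epsilon>\<close> in simp)
    then show ?thesis
      using \<open>0 < \<epsilon>\<close> by simp
  qed
  then show ?thesis
    using \<open>0 < \<delta>\<close> by blast
qed

lemma star_condition_induced:
  assumes "star_condition G act D \<Delta>"
  shows "star_condition G induced_act D' \<Delta>'"
  unfolding star_condition_def
proof (intro conjI allI impI)
  show "properly_discontinuous_on G induced_act (D' - \<Delta>')"
    using assms by (simp add: star_condition_def properly_discontinuous_induced)
  show "cocompact_on G induced_act (D' - \<Delta>')"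
    using assms by (simp add: star_condition_def cocompact_induced)
  fix K and \<epsilon> :: real
  assume "compact K \<and> K \<subseteq> D' - \<Delta>' \<and> 0 < \<epsilon>"
  then show "\<exists>\<delta>>0. \<forall>g\<in>carrier G. (\<exists>q\<in>induced_act g ` K. \<exists>y\<in>\<Delta>'. dist q y < \<delta>) \<longrightarrow>
      diameter (induced_act g ` K) < \<epsilon>"
    using induced_act_shrinks[OF assms] by (elim conjE) blast
qed

lemma homeomorphism_collapsed: "\<exists>h'. homeomorphism \<Delta> \<Delta>' h h'"
proof (rule homeomorphism_compact[OF compact_\<Delta>])
  show "continuous_on \<Delta> h"
    using \<Delta>_subset
    by (intro continuous_on_eq[OF continuous_on_compose2[OF continuous_f, of \<Delta> "\<lambda>x. (x, 0)"]])
      (auto intro!: continuous_intros simp: collapse)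
qed (use \<Delta>'_eq inj_h in auto)

lemma homeomorphism_outside: "\<exists>f'. homeomorphism ((D - \<Delta>) \<times> {0..1}) (D' - \<Delta>') f f'"
  by (rule homeomorphism_injective_part[OF compact_cylinder continuous_f image_f _ inj_f])
    (use f_in_\<Delta>'_iff in auto)

end

theorem lemma3p1:
  fixes G :: "('g, 'm) monoid_scheme"
    and act :: "'g \<Rightarrow> 'a::euclidean_space \<Rightarrow> 'a"
    and \<Delta> :: "'a set"
  assumes "group_action_on G act (cball 0 1)"
    and "closed \<Delta>" and "\<Delta> \<subseteq> sphere 0 1"
    and "\<forall>g\<in>carrier G. act g ` \<Delta> \<subseteq> \<Delta>"
    and "star_condition G act (cball 0 1) \<Delta>"
  shows "\<exists>(act' :: 'g \<Rightarrow> 'a \<times> real \<Rightarrow> 'a \<times> real) \<Delta>' (h :: 'a \<Rightarrow> 'a \<times> real) (f :: 'a \<times> real \<Rightarrow> 'a \<times> real).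
           group_action_on G act' (cball 0 1) \<and>
           closed \<Delta>' \<and> \<Delta>' \<subseteq> sphere 0 1 \<and>
           (\<forall>g\<in>carrier G. act' g ` \<Delta>' \<subseteq> \<Delta>') \<and>
           star_condition G act' (cball 0 1) \<Delta>' \<and>
           (\<exists>h'. homeomorphism \<Delta> \<Delta>' h h') \<and>
           (\<forall>g\<in>carrier G. \<forall>x\<in>\<Delta>. h (act g x) = act' g (h x)) \<and>
           continuous_on (cball 0 1 \<times> {0..1}) f \<and>
           f ` (cball 0 1 \<times> {0..1}) = cball 0 1 \<and>
           (\<forall>g\<in>carrier G. \<forall>x\<in>cball 0 1. \<forall>t\<in>{0..1}. f (act g x, t) = act' g (f (x, t))) \<and>
           f ` (\<Delta> \<times> {0..1}) \<subseteq> \<Delta>' \<and>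
           (\<exists>f'. homeomorphism ((cball 0 1 - \<Delta>) \<times> {0..1}) (cball 0 1 - \<Delta>') f f')"
proof -
  define \<Delta>' where "\<Delta>' = (\<lambda>y. (y, 0::real)) ` \<Delta>"
  interpret cylinder_collapse G act "cball 0 1" \<Delta> "pinch_map \<Delta>" "\<lambda>y. (y, 0)" "cball 0 1" \<Delta>'
  proof
    show "pinch_map \<Delta> ` (cball 0 1 \<times> {0..1}) = cball 0 1"
      using assms(2,3) by (rule pinch_map_image)
    show "inj_on (pinch_map \<Delta>) ((cball 0 1 - \<Delta>) \<times> {0..1})"
      using assms(2,3) by (rule inj_on_pinch_map)
    show "pinch_map \<Delta> (x, t) \<notin> \<Delta>'" if "x \<in> cball 0 1 - \<Delta>" for x t
      using pinch_map_notin_collapsed[OF assms(2,3)] that by (simp add: \<Delta>'_def)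
  qed (use assms pinch_map_collapse continuous_on_pinch_map in \<open>auto simp: \<Delta>'_def inj_on_def\<close>)
  have \<Delta>'_facts: "\<Delta>' \<subseteq> sphere 0 1" "pinch_map \<Delta> ` (\<Delta> \<times> {0..1}) \<subseteq> \<Delta>'"
    using assms(3) pinch_map_collapse[OF assms(3)] by (auto simp: \<Delta>'_def)
  show ?thesis
    by (intro exI[of _ induced_act] exI[of _ \<Delta>'] exI[of _ "\<lambda>y. (y, 0)"], rule exI[of _ "pinch_map \<Delta>"],
        intro conjI ballI)
      (use \<Delta>'_facts group_action_induced compact_imp_closed[OF compact_\<Delta>'] induced_act_invariant
      star_condition_induced[OF assms(5)] homeomorphism_collapsed induced_act_h
      continuous_on_pinch_map pinch_map_image[OF assms(2,3)] induced_act_f homeomorphism_outside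
      in auto)
qed

end
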